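(* If $G$ is a gate and $v\in V(G)$, then $v$ belongs to exactly two cliques of $G$, and if $C_1$ and $C_2$ are these two cliques then $C_1\cap C_2=\{v\}$.
   Context: All graphs are finite and simple. A clique is a maximal complete set of vertices. Gates are defined recursively: (i) every chordless cycle $C_n$ with $n\geq 4$ is a gate; (ii) if $H$ is a gate, $C$ and $C'$ are disjoint cliques of $H$, and $P=(v_1,\dots,v_l)$ with $l\geq 2$ is a chordless path vertex-disjoint from $H$, then the union of $H$ and $P$ together with all edges between $v_1$ and the vertices of $C$ and all edges between $v_l$ and the vertices of $C'$ is a gate; (iii) there are no other gates. *)

theory Defs
  imports Main
begin

text \<open>A simple graph is given by a vertex set V and a set E of 2-element edge sets.\<close>

definition complete_set :: "'a set \<Rightarrow> 'a set set \<Rightarrow> 'a set \<Rightarrow> bool" where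
  "complete_set V E S \<longleftrightarrow> S \<subseteq> V \<and> (\<forall>x\<in>S. \<forall>y\<in>S. x \<noteq> y \<longrightarrow> {x, y} \<in> E)"

definition is_clique :: "'a set \<Rightarrow> 'a set set \<Rightarrow> 'a set \<Rightarrow> bool" where
  "is_clique V E C \<longleftrightarrow> complete_set V E C \<and> (\<forall>S. complete_set V E S \<and> C \<subseteq> S \<longrightarrow> S = C)"

definition cycle_edges :: "'a list \<Rightarrow> 'a set set" where
  "cycle_edges vs = {{vs ! i, vs ! (Suc i mod length vs)} | i. i < length vs}"

definition path_edges :: "'a list \<Rightarrow> 'a set set" where
  "path_edges ps = {{ps ! i, ps ! Suc i} | i. Suc i < length ps}"

inductive gate :: "'a set \<Rightarrow> 'a set set \<Rightarrow> bool" where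
  cycle: "distinct vs \<Longrightarrow> length vs \<ge> 4 \<Longrightarrow> gate (set vs) (cycle_edges vs)"
| extend: "gate V E \<Longrightarrow> is_clique V E C \<Longrightarrow> is_clique V E C' \<Longrightarrow> C \<inter> C' = {} \<Longrightarrow>
    distinct ps \<Longrightarrow> length ps \<ge> 2 \<Longrightarrow> set ps \<inter> V = {} \<Longrightarrow>
    gate (V \<union> set ps)
         (E \<union> path_edges ps \<union> {{hd ps, c} | c. c \<in> C} \<union> {{last ps, c} | c. c \<in> C'})"

end

theory Submission
  imports Defs
begin

text \<open>
  Call the neighbourhood of v split if it is the union of two nonempty, disjoint, complete sets
  A and B with no edge between them. Then the cliques through v are exactly {v} \<union> A and
  {v} \<union> B, which meet in {v}, so it suffices to show that in a gate every neighbourhood splits.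
  This survives the inductive construction. On a chordless cycle, and at an inner vertex of an
  attached path, the neighbourhood consists of two nonadjacent vertices. An end of the attached
  path sees the clique C (or C') and its neighbour on the path, which are nonadjacent. An old
  vertex v \<in> C has C = {v} \<union> A for one side A of its split, and the new end simply joins A;
  the neighbourhoods of the old vertices outside C \<union> C' do not change.
\<close>

definition simple_graph :: "'a set \<Rightarrow> 'a set set \<Rightarrow> bool" where
  "simple_graph V E \<longleftrightarrow> E \<subseteq> {{x, y} | x y. x \<in> V \<and> y \<in> V \<and> x \<noteq> y}"

definition nbhd :: "'a set set \<Rightarrow> 'a \<Rightarrow> 'a set" where
  "nbhd E v = {u. {v, u} \<in> E}"

definition nbhd_splits :: "'a set \<Rightarrow> 'a set set \<Rightarrow> 'a \<Rightarrow> 'a set \<Rightarrow> 'a set \<Rightarrow> bool" where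
  "nbhd_splits V E v A B \<longleftrightarrow>
     A \<noteq> {} \<and> B \<noteq> {} \<and> A \<inter> B = {} \<and> nbhd E v = A \<union> B \<and>
     complete_set V E A \<and> complete_set V E B \<and> (\<forall>a\<in>A. \<forall>b\<in>B. {a, b} \<notin> E)"

lemma simple_graph_edgeD:
  assumes "simple_graph V E" "{x, y} \<in> E"
  shows "x \<noteq> y" "x \<in> V" "y \<in> V"
  using assms by (auto simp: simple_graph_def doubleton_eq_iff)

lemma simple_graph_mono: "simple_graph V E \<Longrightarrow> V \<subseteq> V' \<Longrightarrow> simple_graph V' E"
  unfolding simple_graph_def by blast

lemma simple_graph_Un: "simple_graph V E \<Longrightarrow> simple_graph V F \<Longrightarrow> simple_graph V (E \<union> F)"
  by (simp add: simple_graph_def)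

lemma simple_graph_star:
  "x \<in> V \<Longrightarrow> S \<subseteq> V \<Longrightarrow> x \<notin> S \<Longrightarrow> simple_graph V {{x, c} | c. c \<in> S}"
  unfolding simple_graph_def by blast

lemma nbhd_subset: "simple_graph V E \<Longrightarrow> nbhd E v \<subseteq> V"
  by (auto simp: nbhd_def dest: simple_graph_edgeD)

lemma not_in_nbhd_self: "simple_graph V E \<Longrightarrow> v \<notin> nbhd E v"
  using simple_graph_edgeD(1)[of V E v v] unfolding nbhd_def by auto

lemma nbhd_eqI:
  assumes "simple_graph V E" "S \<subseteq> V" "\<And>u. u \<in> V \<Longrightarrow> {x, u} \<in> E \<longleftrightarrow> u \<in> S"
  shows "nbhd E x = S"
proof -
  have "{x, u} \<notin> E" if "u \<notin> V" for u
    using simple_graph_edgeD(3)[OF assms(1)] that by blast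
  then show ?thesis
    using assms(2,3) unfolding nbhd_def by blast
qed

lemma complete_set_mono:
  "complete_set V E A \<Longrightarrow> V \<subseteq> V' \<Longrightarrow> E \<subseteq> E' \<Longrightarrow> complete_set V' E' A"
  by (auto simp: complete_set_def)

lemma complete_set_subset: "complete_set V E S \<Longrightarrow> T \<subseteq> S \<Longrightarrow> complete_set V E T"
  by (auto simp: complete_set_def)

lemma complete_set_insert:
  assumes "complete_set V E A" "v \<in> V" "A \<subseteq> nbhd E v"
  shows "complete_set V E (insert v A)"
  using assms by (auto simp: complete_set_def nbhd_def insert_commute)

lemma clique_nonempty:
  assumes "is_clique V E C" "x \<in> V"
  shows "C \<noteq> {}"
proof
  assume "C = {}"
  moreover have "complete_set V E {x}"
    using \<open>x \<in> V\<close> by (simp add: complete_set_def)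
  ultimately show False
    using assms(1) unfolding is_clique_def by blast
qed

lemma nbhd_splits_sym:
  assumes "nbhd_splits V E v A B"
  shows "nbhd_splits V E v B A"
proof -
  have "\<forall>b\<in>B. \<forall>a\<in>A. {b, a} \<notin> E"
    using assms unfolding nbhd_splits_def by (metis insert_commute)
  with assms show ?thesis
    unfolding nbhd_splits_def by (auto simp: Int_commute Un_commute)
qed

lemma nbhd_splits_two_points:
  assumes "a \<in> V" "b \<in> V" "a \<noteq> b" "{a, b} \<notin> E" "nbhd E v = {a, b}"
  shows "nbhd_splits V E v {a} {b}"
  using assms by (auto simp: nbhd_splits_def complete_set_def)

lemma clique_insert_split:
  assumes "v \<in> V" and split: "nbhd_splits V E v A B"
  shows "is_clique V E (insert v A)"
  unfolding is_clique_def
proof (intro conjI allI impI)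
  show "complete_set V E (insert v A)"
    using split \<open>v \<in> V\<close> by (intro complete_set_insert) (auto simp: nbhd_splits_def)
  fix S assume S: "complete_set V E S \<and> insert v A \<subseteq> S"
  obtain a where "a \<in> A" using split by (auto simp: nbhd_splits_def)
  have "x \<in> insert v A" if "x \<in> S" for x
  proof (rule ccontr)
    assume x: "x \<notin> insert v A"
    with S that have "{v, x} \<in> E" "{a, x} \<in> E"
      using \<open>a \<in> A\<close> unfolding complete_set_def by auto
    with x split have "x \<in> B" by (auto simp: nbhd_splits_def nbhd_def)
    with split \<open>a \<in> A\<close> \<open>{a, x} \<in> E\<close> show False by (auto simp: nbhd_splits_def)
  qed
  with S show "S = insert v A" by blast
qed

lemma cliques_through_split:
  assumes "v \<in> V" and split: "nbhd_splits V E v A B"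
  shows "{C. is_clique V E C \<and> v \<in> C} = {insert v A, insert v B}"
proof -
  have cliques: "is_clique V E (insert v A)" "is_clique V E (insert v B)"
    using clique_insert_split[OF \<open>v \<in> V\<close> split]
      clique_insert_split[OF \<open>v \<in> V\<close> nbhd_splits_sym[OF split]] by auto
  have "K \<in> {insert v A, insert v B}" if K: "is_clique V E K" "v \<in> K" for K
  proof -
    have complete: "complete_set V E K"
      using K(1) by (simp add: is_clique_def)
    have K_nbhd: "K \<subseteq> insert v (A \<union> B)"
    proof
      fix x assume "x \<in> K"
      then have "x = v \<or> {v, x} \<in> E" using complete K(2) by (auto simp: complete_set_def)
      then show "x \<in> insert v (A \<union> B)" using split by (auto simp: nbhd_splits_def nbhd_def)
    qed
    have "K \<subseteq> insert v A \<or> K \<subseteq> insert v B"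
    proof (rule ccontr)
      assume "\<not> ?thesis"
      then obtain a b where "a \<in> K" "a \<in> A" "b \<in> K" "b \<in> B"
        using K_nbhd by blast
      moreover have "a \<noteq> b" using calculation split by (auto simp: nbhd_splits_def)
      ultimately have "{a, b} \<in> E" using complete by (simp add: complete_set_def)
      with \<open>a \<in> A\<close> \<open>b \<in> B\<close> split show False by (simp add: nbhd_splits_def)
    qed
    moreover have "complete_set V E (insert v A)" "complete_set V E (insert v B)"
      using cliques by (simp_all add: is_clique_def)
    moreover have "\<And>S. complete_set V E S \<Longrightarrow> K \<subseteq> S \<Longrightarrow> S = K"
      using K(1) by (simp add: is_clique_def)
    ultimately show ?thesis by blast
  qed
  with cliques show ?thesis by auto
qed

lemma cycle_edges_adj:
  assumes "distinct vs" "i < length vs" "j < length vs"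
  shows "{vs ! i, vs ! j} \<in> cycle_edges vs \<longleftrightarrow> j = Suc i mod length vs \<or> i = Suc j mod length vs"
proof -
  have eq: "vs ! a = vs ! b \<longleftrightarrow> a = b" if "a < length vs" "b < length vs" for a b
    using assms(1) that by (simp add: nth_eq_iff_index_eq)
  have "{vs ! i, vs ! j} = {vs ! k, vs ! (Suc k mod length vs)} \<longleftrightarrow>
      (i = k \<and> j = Suc k mod length vs) \<or> (i = Suc k mod length vs \<and> j = k)"
    if "k < length vs" for k
  proof -
    have "Suc k mod length vs < length vs"
      using that by (intro mod_less_divisor) linarith
    then show ?thesis
      unfolding doubleton_eq_iff using eq that assms(2,3) by meson
  qed
  then show ?thesis
    using assms(2,3) unfolding cycle_edges_def by auto
qed

lemma simple_graph_cycle_edges: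
  assumes "distinct vs" "2 \<le> length vs"
  shows "simple_graph (set vs) (cycle_edges vs)"
  unfolding simple_graph_def cycle_edges_def
proof clarify
  fix i assume i: "i < length vs"
  then have "Suc i mod length vs \<noteq> i" "Suc i mod length vs < length vs"
    using assms(2) by (auto simp: mod_if)
  then show "\<exists>x y. {vs ! i, vs ! (Suc i mod length vs)} = {x, y} \<and> x \<in> set vs \<and> y \<in> set vs \<and> x \<noteq> y"
    using i nth_eq_iff_index_eq[OF assms(1)] by (metis nth_mem)
qed

text \<open>\<open>(i + n - 1) mod n\<close> is the cyclic predecessor of i; writing \<open>i - 1\<close> would truncate at 0.\<close>

lemma cycle_index_arith:
  fixes i n :: nat
  assumes "i < n" "4 \<le> n"
  shows "Suc i mod n \<noteq> i"
    and "Suc i mod n \<noteq> (i + n - 1) mod n"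
    and "(i + n - 1) mod n \<noteq> Suc (Suc i mod n) mod n"
    and "j < n \<Longrightarrow> i = Suc j mod n \<longleftrightarrow> j = (i + n - 1) mod n"
proof -
  show "Suc i mod n \<noteq> i"
    using assms by (simp add: mod_if)
  show "Suc i mod n \<noteq> (i + n - 1) mod n"
    using assms by (cases "i = 0"; cases "Suc i = n") (auto simp: mod_if)
  show "(i + n - 1) mod n \<noteq> Suc (Suc i mod n) mod n"
    using assms by (cases "i = 0"; cases "Suc i = n"; cases "Suc (Suc i) = n") (auto simp: mod_if)
  show "i = Suc j mod n \<longleftrightarrow> j = (i + n - 1) mod n" if "j < n"
    using assms that by (cases "i = 0"; cases "Suc j = n") (auto simp: mod_if)
qed

lemma cycle_nbhd_splits:
  assumes vs: "distinct vs" "4 \<le> length vs" and i: "i < length vs"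
  shows "nbhd_splits (set vs) (cycle_edges vs) (vs ! i)
           {vs ! (Suc i mod length vs)} {vs ! ((i + length vs - 1) mod length vs)}"
proof (rule nbhd_splits_two_points)
  let ?n = "length vs"
  let ?s = "Suc i mod ?n" and ?p = "(i + ?n - 1) mod ?n"
  have "0 < ?n" using i by linarith
  then have s: "?s < ?n" and p: "?p < ?n" by (simp_all only: mod_less_divisor)
  have adj: "{vs ! i, vs ! j} \<in> cycle_edges vs \<longleftrightarrow> j = ?s \<or> j = ?p" if "j < ?n" for j
    using cycle_edges_adj[OF vs(1) i that] cycle_index_arith(4)[OF i vs(2) that] by simp
  show "vs ! ?s \<noteq> vs ! ?p"
    using cycle_index_arith(2)[OF i vs(2)] s p nth_eq_iff_index_eq[OF vs(1)] by auto
  show "{vs ! ?s, vs ! ?p} \<notin> cycle_edges vs"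
    using cycle_edges_adj[OF vs(1) s p] cycle_index_arith(1,3)[OF i vs(2)]
      cycle_index_arith(4)[OF i vs(2) p] by auto
  show "vs ! ?s \<in> set vs" "vs ! ?p \<in> set vs"
    using s p by auto
  have "nbhd (cycle_edges vs) (vs ! i) \<subseteq> set vs"
    using nbhd_subset simple_graph_cycle_edges[OF vs(1)] vs(2) by simp
  then show "nbhd (cycle_edges vs) (vs ! i) = {vs ! ?s, vs ! ?p}"
  proof (intro set_eqI iffI)
    fix u assume "u \<in> nbhd (cycle_edges vs) (vs ! i)"
    moreover from this obtain j where "j < ?n" "u = vs ! j"
      using \<open>nbhd _ _ \<subseteq> set vs\<close> by (metis in_set_conv_nth subsetD)
    ultimately show "u \<in> {vs ! ?s, vs ! ?p}"
      using adj by (auto simp: nbhd_def)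
  next
    fix u assume "u \<in> {vs ! ?s, vs ! ?p}"
    then show "u \<in> nbhd (cycle_edges vs) (vs ! i)"
      using adj s p by (auto simp: nbhd_def)
  qed
qed

lemma path_edges_adj:
  assumes "distinct ps" "i < length ps" "j < length ps"
  shows "{ps ! i, ps ! j} \<in> path_edges ps \<longleftrightarrow> j = Suc i \<or> i = Suc j"
proof -
  have eq: "ps ! a = ps ! b \<longleftrightarrow> a = b" if "a < length ps" "b < length ps" for a b
    using assms(1) that by (simp add: nth_eq_iff_index_eq)
  have "{ps ! i, ps ! j} = {ps ! k, ps ! Suc k} \<longleftrightarrow> (i = k \<and> j = Suc k) \<or> (i = Suc k \<and> j = k)"
    if "Suc k < length ps" for k
    unfolding doubleton_eq_iff using eq that assms(2,3) by (meson Suc_lessD)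
  then show ?thesis
    using assms(2,3) unfolding path_edges_def by auto
qed

lemma path_edges_subset: "e \<in> path_edges ps \<Longrightarrow> e \<subseteq> set ps"
  by (auto simp: path_edges_def)

lemma simple_graph_path_edges:
  assumes "distinct ps"
  shows "simple_graph (set ps) (path_edges ps)"
  unfolding simple_graph_def path_edges_def
proof clarify
  fix i assume i: "Suc i < length ps"
  then have "ps ! i \<noteq> ps ! Suc i"
    using nth_eq_iff_index_eq[OF assms, of i "Suc i"] by simp
  then show "\<exists>x y. {ps ! i, ps ! Suc i} = {x, y} \<and> x \<in> set ps \<and> y \<in> set ps \<and> x \<noteq> y"
    using i by (metis Suc_lessD nth_mem)
qed

lemma path_edges_rev: "path_edges (rev ps) = path_edges ps"
proof -
  have "path_edges (rev ps) \<subseteq> path_edges ps" for ps :: "'a list"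
  proof
    fix e assume "e \<in> path_edges (rev ps)"
    then obtain i where i: "Suc i < length ps" "e = {rev ps ! i, rev ps ! Suc i}"
      by (auto simp: path_edges_def)
    define k where "k = length ps - 2 - i"
    have "Suc k < length ps" using i(1) by (simp add: k_def)
    moreover have "e = {ps ! k, ps ! Suc k}"
      using i by (simp add: k_def rev_nth Suc_diff_Suc numeral_2_eq_2 insert_commute)
    ultimately show "e \<in> path_edges ps"
      unfolding path_edges_def by blast
  qed
  from this this[of "rev ps"] show ?thesis by auto
qed

definition attach_path :: "'a set set \<Rightarrow> 'a set \<Rightarrow> 'a set \<Rightarrow> 'a list \<Rightarrow> 'a set set" where
  "attach_path E C C' ps =
     E \<union> path_edges ps \<union> {{hd ps, c} | c. c \<in> C} \<union> {{last ps, c} | c. c \<in> C'}"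

lemma attach_path_rev: "ps \<noteq> [] \<Longrightarrow> attach_path E C' C (rev ps) = attach_path E C C' ps"
  by (auto simp: attach_path_def path_edges_rev hd_rev last_rev)

locale path_attachment =
  fixes V :: "'a set" and E :: "'a set set" and C C' :: "'a set" and ps :: "'a list"
  assumes simple: "simple_graph V E" and nonempty: "V \<noteq> {}"
    and clique: "is_clique V E C" and clique': "is_clique V E C'" and disjoint: "C \<inter> C' = {}"
    and distinct: "distinct ps" and length: "2 \<le> length ps" and fresh: "set ps \<inter> V = {}"
begin

abbreviation "V' \<equiv> V \<union> set ps"
abbreviation "E' \<equiv> attach_path E C C' ps"

text \<open>By \<open>attach_path_rev\<close>, reversing the path swaps the roles of C and C' without changing
  the graph; this settles the cases of the last path vertex and of the old vertices in C'.\<close>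

lemma reversed: "path_attachment V E C' C (rev ps)"
  using simple nonempty clique clique' disjoint distinct length fresh
  by unfold_locales auto

lemma ps_nonempty: "ps \<noteq> []"
  using length by auto

lemma C_subset: "C \<subseteq> V" "C' \<subseteq> V"
  using clique clique' by (simp_all add: is_clique_def complete_set_def)

lemma hd_fresh: "hd ps \<in> set ps" "hd ps \<notin> V"
  using hd_in_set[OF ps_nonempty] fresh by blast+

lemma last_fresh: "last ps \<in> set ps" "last ps \<notin> V"
  using last_in_set[OF ps_nonempty] fresh by blast+

lemma hd_eq_nth: "hd ps = ps ! 0" and last_eq_nth: "last ps = ps ! (length ps - 1)"
  using ps_nonempty by (simp_all add: hd_conv_nth last_conv_nth)

lemma nth_eq_iff: "i < length ps \<Longrightarrow> j < length ps \<Longrightarrow> ps ! i = ps ! j \<longleftrightarrow> i = j"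
  using distinct by (simp add: nth_eq_iff_index_eq)

lemma hd_neq_last: "hd ps \<noteq> last ps"
  using nth_eq_iff[of 0 "length ps - 1"] length ps_nonempty by (simp add: hd_eq_nth last_eq_nth)

lemma nth_fresh: "i < length ps \<Longrightarrow> ps ! i \<notin> V"
  using fresh nth_mem by blast

lemma second_fresh: "ps ! 1 \<in> set ps" "ps ! 1 \<noteq> hd ps" "ps ! 1 \<notin> V"
proof -
  show "ps ! 1 \<in> set ps" using length by simp
  then show "ps ! 1 \<notin> V" using fresh by blast
  show "ps ! 1 \<noteq> hd ps"
    using nth_eq_iff[of 1 0] length ps_nonempty by (simp add: hd_eq_nth)
qed

lemma subset_attach: "E \<subseteq> E'"
  by (auto simp: attach_path_def)

lemma simple_graph_attach: "simple_graph V' E'"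
  unfolding attach_path_def
  using simple_graph_mono[OF simple] simple_graph_mono[OF simple_graph_path_edges[OF distinct]]
    simple_graph_star[of "hd ps" V' C] simple_graph_star[of "last ps" V' C']
    hd_fresh last_fresh C_subset
  by (intro simple_graph_Un) auto

lemma adj_old_old: "x \<in> V \<Longrightarrow> y \<in> V \<Longrightarrow> {x, y} \<in> E' \<longleftrightarrow> {x, y} \<in> E"
  using fresh hd_fresh last_fresh path_edges_subset[of "{x, y}" ps]
  by (auto simp: attach_path_def doubleton_eq_iff)

lemma adj_old_new:
  assumes "x \<in> V" "y \<in> set ps"
  shows "{x, y} \<in> E' \<longleftrightarrow> (y = hd ps \<and> x \<in> C) \<or> (y = last ps \<and> x \<in> C')"
proof -
  have "{x, y} \<notin> E"
    using simple_graph_edgeD(3)[OF simple, of x y] assms fresh by blast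
  moreover have "{x, y} \<notin> path_edges ps"
    using path_edges_subset[of "{x, y}" ps] assms fresh by blast
  ultimately show ?thesis
    using assms hd_fresh last_fresh by (auto simp: attach_path_def doubleton_eq_iff)
qed

lemma adj_new_new:
  assumes "i < length ps" "j < length ps"
  shows "{ps ! i, ps ! j} \<in> E' \<longleftrightarrow> j = Suc i \<or> i = Suc j"
proof -
  have in_ps: "ps ! i \<in> set ps" "ps ! j \<in> set ps" using assms by simp_all
  then have "{ps ! i, ps ! j} \<notin> E"
    using simple_graph_edgeD(2)[OF simple] fresh by blast
  moreover have "{ps ! i, ps ! j} \<notin> {{hd ps, c} | c. c \<in> C} \<union> {{last ps, c} | c. c \<in> C'}"
    using in_ps C_subset fresh by (auto simp: doubleton_eq_iff)
  ultimately show ?thesis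
    using path_edges_adj[OF distinct assms] by (auto simp: attach_path_def)
qed

lemma nbhd_old_outside:
  assumes "v \<in> V" "v \<notin> C" "v \<notin> C'"
  shows "nbhd E' v = nbhd E v"
proof (rule nbhd_eqI[OF simple_graph_attach])
  show "nbhd E v \<subseteq> V'" using nbhd_subset[OF simple] by blast
  fix u assume "u \<in> V'"
  then show "{v, u} \<in> E' \<longleftrightarrow> u \<in> nbhd E v"
    using adj_old_old[OF assms(1)] adj_old_new[OF assms(1)] assms nbhd_subset[OF simple] fresh
    by (auto simp: nbhd_def)
qed

lemma nbhd_old_in_C:
  assumes "v \<in> C"
  shows "nbhd E' v = insert (hd ps) (nbhd E v)"
proof (rule nbhd_eqI[OF simple_graph_attach])
  have "v \<in> V" "v \<notin> C'" using assms C_subset disjoint by auto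
  show "insert (hd ps) (nbhd E v) \<subseteq> V'" using nbhd_subset[OF simple] hd_fresh by blast
  fix u assume "u \<in> V'"
  then show "{v, u} \<in> E' \<longleftrightarrow> u \<in> insert (hd ps) (nbhd E v)"
    using adj_old_old[OF \<open>v \<in> V\<close>] adj_old_new[OF \<open>v \<in> V\<close>] assms \<open>v \<notin> C'\<close>
      nbhd_subset[OF simple] fresh hd_fresh
    by (auto simp: nbhd_def)
qed

lemma nbhd_hd: "nbhd E' (hd ps) = insert (ps ! 1) C"
proof (rule nbhd_eqI[OF simple_graph_attach])
  show "insert (ps ! 1) C \<subseteq> V'" using second_fresh C_subset by blast
  fix u assume "u \<in> V'"
  then consider "u \<in> V" | j where "j < length ps" "u = ps ! j"
    by (auto simp: in_set_conv_nth)
  then show "{hd ps, u} \<in> E' \<longleftrightarrow> u \<in> insert (ps ! 1) C"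
  proof cases
    case 1
    then show ?thesis
      using adj_old_new[OF 1 hd_fresh(1)] hd_neq_last second_fresh
      by (auto simp: insert_commute)
  next
    case 2
    then show ?thesis
      using adj_new_new[of 0 j] length ps_nonempty nth_eq_iff[of j 1] C_subset nth_fresh[of j]
      by (auto simp: hd_eq_nth)
  qed
qed

lemma nbhd_inner:
  assumes "0 < i" "Suc i < length ps"
  shows "nbhd E' (ps ! i) = {ps ! (i - 1), ps ! Suc i}"
proof (rule nbhd_eqI[OF simple_graph_attach])
  show "{ps ! (i - 1), ps ! Suc i} \<subseteq> V'" using assms by auto
  have inner: "ps ! i \<noteq> hd ps" "ps ! i \<noteq> last ps"
    using assms nth_eq_iff[of i 0] nth_eq_iff[of i "length ps - 1"] ps_nonempty
    by (simp_all add: hd_eq_nth last_eq_nth)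
  fix u assume "u \<in> V'"
  then consider "u \<in> V" | j where "j < length ps" "u = ps ! j"
    by (auto simp: in_set_conv_nth)
  then show "{ps ! i, u} \<in> E' \<longleftrightarrow> u \<in> {ps ! (i - 1), ps ! Suc i}"
  proof cases
    case 1
    then show ?thesis
      using adj_old_new[OF 1, of "ps ! i"] inner assms nth_fresh[of "i - 1"] nth_fresh[of "Suc i"]
      by (auto simp: insert_commute)
  next
    case 2
    then show ?thesis
      using adj_new_new[of i j] assms nth_eq_iff[of j "i - 1"] nth_eq_iff[of j "Suc i"]
      by auto
  qed
qed

lemma complete_C: "complete_set V' E' C"
  using clique subset_attach by (auto simp: is_clique_def intro: complete_set_mono)

lemma complete_hd_C: "complete_set V' E' (insert (hd ps) C)"
  using complete_C hd_fresh(1) nbhd_hd by (intro complete_set_insert) auto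

lemma hd_nbhd_splits: "nbhd_splits V' E' (hd ps) C {ps ! 1}"
proof -
  have "C \<noteq> {}" using clique_nonempty[OF clique] nonempty by blast
  moreover note complete_C
  moreover have "{c, ps ! 1} \<notin> E'" if "c \<in> C" for c
    using adj_old_new[of c "ps ! 1"] that second_fresh C_subset disjoint by auto
  ultimately show ?thesis
    using nbhd_hd second_fresh C_subset
    by (auto simp: nbhd_splits_def complete_set_def)
qed

lemma inner_nbhd_splits:
  assumes "0 < i" "Suc i < length ps"
  shows "nbhd_splits V' E' (ps ! i) {ps ! (i - 1)} {ps ! Suc i}"
  using assms nbhd_inner[OF assms] adj_new_new[of "i - 1" "Suc i"] nth_eq_iff[of "i - 1" "Suc i"]
  by (intro nbhd_splits_two_points) auto

lemma old_outside_nbhd_splits: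
  assumes "v \<in> V" "v \<notin> C" "v \<notin> C'" and split: "nbhd_splits V E v A B"
  shows "nbhd_splits V' E' v A B"
proof -
  have "A \<subseteq> V" "B \<subseteq> V" using split by (auto simp: nbhd_splits_def complete_set_def)
  then have "{a, b} \<notin> E'" if "a \<in> A" "b \<in> B" for a b
    using that split adj_old_old[of a b] by (auto simp: nbhd_splits_def)
  with split show ?thesis
    using nbhd_old_outside[OF assms(1-3)] subset_attach
    by (auto simp: nbhd_splits_def intro: complete_set_mono)
qed

lemma old_in_C_nbhd_splits:
  assumes "v \<in> C" and split: "nbhd_splits V E v A B"
  shows "\<exists>A' B'. nbhd_splits V' E' v A' B'"
proof -
  have "v \<in> V" using assms C_subset by blast
  have extend: "nbhd_splits V' E' v (insert (hd ps) A) B"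
    if split: "nbhd_splits V E v A B" and C: "C = insert v A" for A B
  proof -
    have B: "B \<subseteq> V" "v \<notin> B"
      using split not_in_nbhd_self[OF simple, of v] by (auto simp: nbhd_splits_def complete_set_def)
    have "{a, b} \<notin> E'" if "a \<in> insert (hd ps) A" "b \<in> B" for a b
    proof (cases "a = hd ps")
      case True
      have "b \<notin> C" using that(2) B C split by (auto simp: nbhd_splits_def)
      then show ?thesis
        using True adj_old_new[of b "hd ps"] that(2) B hd_fresh hd_neq_last
        by (auto simp: insert_commute)
    next
      case False
      then show ?thesis
        using that adj_old_old[of a b] B split by (auto simp: nbhd_splits_def complete_set_def)
    qed
    moreover have "complete_set V' E' (insert (hd ps) A)"
      using complete_hd_C by (rule complete_set_subset) (auto simp: C)
    ultimately show ?thesis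
      using split B hd_fresh nbhd_old_in_C[OF \<open>v \<in> C\<close>] subset_attach
      by (auto simp: nbhd_splits_def intro: complete_set_mono)
  qed
  have "C \<in> {insert v A, insert v B}"
    using cliques_through_split[OF \<open>v \<in> V\<close> split] clique \<open>v \<in> C\<close> by blast
  then show ?thesis
    using extend[OF split] extend[OF nbhd_splits_sym[OF split]] by blast
qed

lemma attach_nbhd_splits:
  assumes old: "\<And>v. v \<in> V \<Longrightarrow> \<exists>A B. nbhd_splits V E v A B" and "u \<in> V'"
  shows "\<exists>A B. nbhd_splits V' E' u A B"
proof -
  interpret rev: path_attachment V E C' C "rev ps" by (rule reversed)
  have rev_attach: "attach_path E C' C (rev ps) = E'" by (rule attach_path_rev[OF ps_nonempty])
  consider "u \<in> V" | "u = hd ps" | "u = last ps" | i where "0 < i" "Suc i < length ps" "u = ps ! i"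
  proof (cases "u \<in> V")
    case False
    then obtain i where i: "i < length ps" "u = ps ! i"
      using \<open>u \<in> V'\<close> by (auto simp: in_set_conv_nth)
    consider "i = 0" | "i = length ps - 1" | "0 < i" "Suc i < length ps"
      using i(1) by linarith
    then show thesis
      using that i(2) by cases (simp_all add: hd_eq_nth last_eq_nth)
  qed
  then show ?thesis
  proof cases
    case 1
    obtain A B where split: "nbhd_splits V E u A B" using old 1 by blast
    consider "u \<in> C" | "u \<in> C'" | "u \<notin> C" "u \<notin> C'" by blast
    then show ?thesis
    proof cases
      case 1
      then show ?thesis using old_in_C_nbhd_splits split by blast
    next
      case 2
      show ?thesis
        using rev.old_in_C_nbhd_splits[OF 2 split] unfolding rev_attach set_rev .
    next
      case 3
      then show ?thesis using old_outside_nbhd_splits \<open>u \<in> V\<close> split by blast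
    qed
  next
    case 2
    then show ?thesis using hd_nbhd_splits by blast
  next
    case 3
    show ?thesis
      using rev.hd_nbhd_splits unfolding rev_attach set_rev hd_rev 3[symmetric] by blast
  next
    case 4
    then show ?thesis using inner_nbhd_splits by blast
  qed
qed

end

lemma gate_nonempty: "gate V E \<Longrightarrow> V \<noteq> {}"
  by (induction rule: gate.induct) auto

lemma gate_path_attachment:
  assumes "gate V E" "simple_graph V E" "is_clique V E C" "is_clique V E C'" "C \<inter> C' = {}"
    "distinct ps" "2 \<le> length ps" "set ps \<inter> V = {}"
  shows "path_attachment V E C C' ps"
  using assms gate_nonempty by unfold_locales auto

lemma gate_simple_graph: "gate V E \<Longrightarrow> simple_graph V E"
proof (induction rule: gate.induct)
  case (cycle vs)
  then show ?case by (simp add: simple_graph_cycle_edges)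
next
  case (extend V E C C' ps)
  then interpret path_attachment V E C C' ps by (intro gate_path_attachment)
  show ?case using simple_graph_attach by (simp add: attach_path_def)
qed

lemma gate_nbhd_splits: "gate V E \<Longrightarrow> v \<in> V \<Longrightarrow> \<exists>A B. nbhd_splits V E v A B"
proof (induction arbitrary: v rule: gate.induct)
  case (cycle vs)
  then obtain i where "i < length vs" "v = vs ! i" by (auto simp: in_set_conv_nth)
  then show ?case using cycle_nbhd_splits[OF cycle.hyps] by blast
next
  case (extend V E C C' ps)
  then interpret path_attachment V E C C' ps by (intro gate_path_attachment gate_simple_graph)
  show ?case
    using attach_nbhd_splits[OF extend.IH extend.prems] by (simp add: attach_path_def)
qed

theorem lemma5:
  assumes "gate V E" and "v \<in> V"
  shows "\<exists>C1 C2. C1 \<noteq> C2 \<and> {C. is_clique V E C \<and> v \<in> C} = {C1, C2} \<and> C1 \<inter> C2 = {v}"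
proof -
  obtain A B where split: "nbhd_splits V E v A B"
    using gate_nbhd_splits[OF assms] by blast
  have simple: "simple_graph V E" using gate_simple_graph[OF assms(1)] .
  have "v \<notin> A \<union> B" "A \<inter> B = {}" "A \<noteq> {}"
    using split not_in_nbhd_self[OF simple, of v] by (auto simp: nbhd_splits_def)
  then have "insert v A \<noteq> insert v B" "insert v A \<inter> insert v B = {v}"
    by auto
  then show ?thesis
    using cliques_through_split[OF assms(2) split] by (intro exI conjI)
qed

end
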